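(* There exists a $\mathbb{Z}[t^{\pm 1/2}]$-algebra isomorphism $\widetilde{\Phi}_{\mathrm{A}\to \mathrm{B}}\colon \mathcal{K}_{t, \mathcal{Q}'_{2n-1}}\to \mathcal{K}_{t, \mathcal{Q}_{2n-2}^{\flat}}$ given by $\widetilde{\Phi}_{\mathrm{B}}\circ \widetilde{\Phi}_{\mathrm{A}}^{-1}$. Moreover, this restricts to a bijection from $\widetilde{\mathbf{S}}^{\xi'}=\{L_t^{\mathrm{A}}(m)\mid m\in \mathbb{B}^{\xi'}\}$ to $\widetilde{\mathbf{S}}^{\xi, \flat}=\{L_t(m)\mid m\in \mathbb{B}^{\xi, \flat}\}$.
   Context: Fix $n\geq 2$ and $q\in\mathbb{C}^\times$ not a root of unity. Let $\mathcal{Q}'_{2n-1}$ be a Dynkin quiver of type $\mathrm{A}_{2n-1}$ with an associated height function $\xi'$ (i.e. $\xi'(j)=\xi'(i)+1$ whenever there is an arrow $i\to j$). Let $\mathbb{B}^{\xi'}$ be the set of dominant monomials in the variables $Y_{i,r}$ with $(i,r)$ running over the labelling (via $\xi'$) of the vertices of the Auslander–Reiten quiver of $\mathcal{Q}'_{2n-1}$, and let $\mathcal{K}_{t, \mathcal{Q}'_{2n-1}}=\bigoplus_{m\in\mathbb{B}^{\xi'}}\mathbb{Z}[t^{\pm1/2}]L_t^{\mathrm{A}}(m)$ be the quantum Grothendieck ring of the Hernandez–Leclerc subcategory $\mathcal{C}_{\mathcal{Q}'_{2n-1}}$ of finite-dimensional modules over the quantum loop algebra of type $\mathrm{A}_{2n-1}^{(1)}$,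 where $L_t^{\mathrm{A}}(m)$ is the $(q,t)$-character of the simple module $L(m)$. Let $\mathcal{Q}_{2n-2}$ be a Dynkin quiver of type $\mathrm{A}_{2n-2}$ with an associated height function $\xi$, let $\flat\in\{>,<\}$, let $\mathbb{B}^{\xi,\flat}$ be the set of dominant monomials in the variables $Y_{i,r}$ with $(i,r)$ in the labelling $\overline{I}_{\xi}^{\mathrm{tw},\flat}$ of the twisted Auslander–Reiten quiver $\Upsilon_{[\mathcal{Q}_{2n-2}^\flat]}$, and let $\mathcal{K}_{t, \mathcal{Q}_{2n-2}^{\flat}}=\bigoplus_{m\in\mathbb{B}^{\xi,\flat}}\mathbb{Z}[t^{\pm1/2}]L_t(m)$ be the quantum Grothendieck ring of the corresponding monoidal subcategory $\mathcal{C}_{\mathcal{Q}_{2n-2}^{\flat}}$ of finite-dimensional modules over the quantum loop algebra of type $\mathrm{B}_n^{(1)}$, with $L_t(m)$ the $(q,t)$-character of $L(m)$. Let $\mathcal{A}_v[N_-^{\mathrm{A}_{2n-1}}]$ be the quantized coordinate algebra of type $\mathrm{A}_{2n-1}$ with normalized dual canonical basis $\widetilde{\mathbf{B}}^{\mathrm{up}}$. Let $\widetilde{\Phi}_{\mathrm{A}}\colon\mathcal{A}_v[N_-^{\mathrm{A}_{2n-1}}]\to\mathcal{K}_{t, \mathcal{Q}'_{2n-1}}$ be the Hernandez–Leclerc $\mathbb{Z}$-algebra isomorphism ($v^{\pm1/2}\mapsto t^{\mp1/2}$, normalized unipotent quantum minors $\mapsto$ $(q,t)$-characters of Kirillov–Reshetikhin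 modules), which maps $\widetilde{\mathbf{B}}^{\mathrm{up}}$ bijectively onto $\{L_t^{\mathrm{A}}(m)\mid m\in \mathbb{B}^{\xi'}\}$, and let $\widetilde{\Phi}_{\mathrm{B}}\colon\mathcal{A}_v[N_-^{\mathrm{A}_{2n-1}}]\to\mathcal{K}_{t, \mathcal{Q}_{2n-2}^{\flat}}$ be the $\mathbb{Z}$-algebra isomorphism (with $v^{\pm1/2}\mapsto t^{\mp1/2}$) constructed in the paper, which maps $\widetilde{\mathbf{B}}^{\mathrm{up}}$ bijectively onto $\{L_t(m)\mid m\in \mathbb{B}^{\xi, \flat}\}$. *)

theory Defs
  imports Main
begin

text \<open>The quantum coordinate algebra and the two
quantum Grothendieck rings are modelled as (possibly noncommutative) unital rings
carrying a scalar action of a commutative coefficient ring (standing for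
Z[v^(+-1/2)] resp. Z[t^(+-1/2)]).\<close>

definition ring_iso :: "('a::ring_1 \<Rightarrow> 'b::ring_1) \<Rightarrow> bool" where
  "ring_iso f \<longleftrightarrow> bij f \<and> (\<forall>x y. f (x + y) = f x + f y)
     \<and> (\<forall>x y. f (x * y) = f x * f y) \<and> f 1 = 1"

definition is_algebra :: "('r::comm_ring_1 \<Rightarrow> 'a::ring_1 \<Rightarrow> 'a) \<Rightarrow> bool" where
  "is_algebra sm \<longleftrightarrow>
     (\<forall>x. sm 1 x = x) \<and>
     (\<forall>c d x. sm (c * d) x = sm c (sm d x)) \<and>
     (\<forall>c d x. sm (c + d) x = sm c x + sm d x) \<and>
     (\<forall>c x y. sm c (x + y) = sm c x + sm c y) \<and>
     (\<forall>c x y. sm c (x * y) = sm c x * y) \<and>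
     (\<forall>c x y. sm c (x * y) = x * sm c y)"

text \<open>A ring isomorphism which is semilinear along the coefficient map tau
(e.g. tau: v^(+-1/2) maps to t^(-+1/2)). With tau = id this is an algebra isomorphism.\<close>
definition semilinear_iso ::
  "('r \<Rightarrow> 'a::ring_1 \<Rightarrow> 'a) \<Rightarrow> ('s \<Rightarrow> 'b::ring_1 \<Rightarrow> 'b) \<Rightarrow> ('r \<Rightarrow> 's)
     \<Rightarrow> ('a \<Rightarrow> 'b) \<Rightarrow> bool" where
  "semilinear_iso smA smB \<tau> f \<longleftrightarrow> ring_iso f \<and> (\<forall>c x. f (smA c x) = smB (\<tau> c) (f x))"

definition algebra_iso ::
  "('r \<Rightarrow> 'a::ring_1 \<Rightarrow> 'a) \<Rightarrow> ('r \<Rightarrow> 'b::ring_1 \<Rightarrow> 'b) \<Rightarrow> ('a \<Rightarrow> 'b) \<Rightarrow> bool" where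
  "algebra_iso smA smB f \<longleftrightarrow> semilinear_iso smA smB id f"

end

theory Submission
  imports Defs
begin

text \<open>The composite is an isomorphism because semilinear isomorphisms are closed under
inversion and composition, and the twists cancel: \<open>\<tau> \<circ> inv \<tau> = id\<close>. The basis statement
only uses that both maps are bijections which carry the same set onto the two sets of
simple characters.\<close>

lemma ring_iso_inv:
  assumes "ring_iso f"
  shows "ring_iso (inv f)"
proof -
  have bij: "bij f" and add: "\<And>x y. f (x + y) = f x + f y"
    and mult: "\<And>x y. f (x * y) = f x * f y" and one: "f 1 = 1"
    using assms by (auto simp: ring_iso_def)
  have f_inv: "\<And>y. f (inv f y) = y" and inv_f: "\<And>x. inv f (f x) = x"
    using bij by (simp_all add: bij_is_surj surj_f_inv_f bij_is_inj)
  have "inv f (x + y) = inv f x + inv f y" for x y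
    by (metis add f_inv inv_f)
  moreover have "inv f (x * y) = inv f x * inv f y" for x y
    by (metis mult f_inv inv_f)
  ultimately show ?thesis
    using bij one inv_f by (metis ring_iso_def bij_imp_bij_inv)
qed

lemma ring_iso_comp:
  assumes "ring_iso f" and "ring_iso g"
  shows "ring_iso (g \<circ> f)"
  using assms by (simp add: ring_iso_def bij_comp)

lemma semilinear_iso_inv:
  assumes "semilinear_iso smA smB \<tau> f" and "bij \<tau>"
  shows "semilinear_iso smB smA (inv \<tau>) (inv f)"
proof -
  have iso: "ring_iso f" and lin: "\<And>c x. f (smA c x) = smB (\<tau> c) (f x)"
    using assms(1) by (auto simp: semilinear_iso_def)
  have "bij f" using iso by (simp add: ring_iso_def)
  then have f_inv: "\<And>y. f (inv f y) = y" and inv_f: "\<And>x. inv f (f x) = x"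
    by (simp_all add: bij_is_surj surj_f_inv_f bij_is_inj)
  have tau_inv: "\<And>c. \<tau> (inv \<tau> c) = c"
    using assms(2) by (simp add: bij_is_surj surj_f_inv_f)
  have "inv f (smB c y) = smA (inv \<tau> c) (inv f y)" for c y
    by (metis lin f_inv inv_f tau_inv)
  then show ?thesis
    using iso by (simp add: semilinear_iso_def ring_iso_inv)
qed

lemma semilinear_iso_comp:
  assumes "semilinear_iso smA smB \<sigma> f" and "semilinear_iso smB smC \<tau> g"
  shows "semilinear_iso smA smC (\<tau> \<circ> \<sigma>) (g \<circ> f)"
  using assms by (simp add: semilinear_iso_def ring_iso_comp)

lemma bij_betw_inv_of_bij:
  assumes "bij f" and "bij_betw f A B"
  shows "bij_betw (inv f) B A"
proof -
  have "bij_betw (inv_into A f) B A" using assms(2) by (rule bij_betw_inv_into)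
  moreover have "inv_into A f y = inv f y" if "y \<in> B" for y
    using that assms by (metis bij_betw_imp_surj_on bij_is_inj f_inv_into_f inv_f_f)
  ultimately show ?thesis using bij_betw_cong by blast
qed

theorem theorem12p2:
  fixes smN :: "'v::comm_ring_1 \<Rightarrow> 'a::ring_1 \<Rightarrow> 'a"
    and smA :: "'r::comm_ring_1 \<Rightarrow> 'k1::ring_1 \<Rightarrow> 'k1"
    and smB :: "'r \<Rightarrow> 'k2::ring_1 \<Rightarrow> 'k2"
    and \<tau> :: "'v \<Rightarrow> 'r"
    and PhiA :: "'a \<Rightarrow> 'k1" and PhiB :: "'a \<Rightarrow> 'k2"
    and Bup :: "'a set" and SA :: "'k1 set" and SB :: "'k2 set"
  assumes "is_algebra smN" and "is_algebra smA" and "is_algebra smB"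
    and "ring_iso \<tau>"
    and "semilinear_iso smN smA \<tau> PhiA"
    and "semilinear_iso smN smB \<tau> PhiB"
    and "bij_betw PhiA Bup SA"
    and "bij_betw PhiB Bup SB"
  shows "algebra_iso smA smB (PhiB \<circ> inv PhiA)
         \<and> bij_betw (PhiB \<circ> inv PhiA) SA SB"
proof
  have bij_tau: "bij \<tau>" using assms(4) by (simp add: ring_iso_def)
  have "semilinear_iso smA smB (\<tau> \<circ> inv \<tau>) (PhiB \<circ> inv PhiA)"
    using semilinear_iso_comp[OF semilinear_iso_inv[OF assms(5) bij_tau] assms(6)] .
  moreover have "\<tau> \<circ> inv \<tau> = id"
    using bij_tau by (simp add: bij_is_surj surj_f_inv_f fun_eq_iff)
  ultimately show "algebra_iso smA smB (PhiB \<circ> inv PhiA)"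
    by (simp add: algebra_iso_def)
  have "bij PhiA" using assms(5) by (simp add: semilinear_iso_def ring_iso_def)
  then show "bij_betw (PhiB \<circ> inv PhiA) SA SB"
    using bij_betw_trans[OF bij_betw_inv_of_bij assms(8)] assms(7) by blast
qed

end
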